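(* Let $X$ be the vertex set of a connected simplicial graph with bounded geometry, equipped with the shortest path metric, which is $\delta$-hyperbolic, and fix $e\in X$ and $p\geq 1$. For $x\in X$, $k\in\mathbb{N}$, $n\in\mathbb{N}\setminus\{0\}$, let $F_{x,k,n}$ be the set of all points of $X\setminus B(e;3\delta)$ lying on $g([n,2n])$ for some geodesic $g$ from some $y$ with $d(x,y)\leq k$ to $e$ (parametrised by arc length starting at $y$), let $F(x,k,n)\in\ell^p(X)$ be its characteristic function, and set $H(x,n)=\frac{1}{n}\sum_{0\leq k\leq n/4}F(x,k,n)$. Then $\|H(x,n)\|_p^p\preceq n$ for all $x\in X$, $n\geq 1$, and $\|H(x,n)\|_p^p\asymp n$ for all $x,n$ with $d(x,e)\geq 2n$.
   Context: Bounded geometry: for every $r$ there is a uniform bound on the cardinality of balls of radius $r$. $\delta$-hyperbolicity in the Rips sense. $A\preceq B$ means there is a constant $C$ (independent of $x,n$) with $A\leq CB+C$; $A\asymp B$ means $A\preceq B$ and $B\preceq A$. *)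

theory Defs
  imports "HOL-Analysis.Analysis"
begin

text \<open>Simple graphs on the vertex type 'a given by an adjacency relation E.
  The vertex set X is the whole type 'a.\<close>

definition simplicial_graph :: "('a \<Rightarrow> 'a \<Rightarrow> bool) \<Rightarrow> bool" where
  "simplicial_graph E \<longleftrightarrow> (\<forall>x y. E x y \<longrightarrow> E y x) \<and> (\<forall>x. \<not> E x x)"

definition walk :: "('a \<Rightarrow> 'a \<Rightarrow> bool) \<Rightarrow> 'a list \<Rightarrow> bool" where
  "walk E xs \<longleftrightarrow> xs \<noteq> [] \<and> (\<forall>i. Suc i < length xs \<longrightarrow> E (xs ! i) (xs ! Suc i))"

definition connected_graph :: "('a \<Rightarrow> 'a \<Rightarrow> bool) \<Rightarrow> bool" where
  "connected_graph E \<longleftrightarrow> (\<forall>x y. \<exists>xs. walk E xs \<and> hd xs = x \<and> last xs = y)"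

definition gdist :: "('a \<Rightarrow> 'a \<Rightarrow> bool) \<Rightarrow> 'a \<Rightarrow> 'a \<Rightarrow> nat" where
  "gdist E x y = (LEAST n. \<exists>xs. walk E xs \<and> hd xs = x \<and> last xs = y \<and> length xs = Suc n)"

definition bounded_geometry :: "('a \<Rightarrow> 'a \<Rightarrow> bool) \<Rightarrow> bool" where
  "bounded_geometry E \<longleftrightarrow>
     (\<forall>r::nat. \<exists>N::nat. \<forall>x. finite {y. gdist E x y \<le> r} \<and> card {y. gdist E x y \<le> r} \<le> N)"

definition geodesic :: "('a \<Rightarrow> 'a \<Rightarrow> bool) \<Rightarrow> (nat \<Rightarrow> 'a) \<Rightarrow> 'a \<Rightarrow> 'a \<Rightarrow> bool" where
  "geodesic E g x y \<longleftrightarrow> g 0 = x \<and> g (gdist E x y) = y \<and>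
     (\<forall>i j. i \<le> gdist E x y \<longrightarrow> j \<le> gdist E x y \<longrightarrow>
        gdist E (g i) (g j) = nat \<bar>int i - int j\<bar>)"

definition rips_hyperbolic :: "('a \<Rightarrow> 'a \<Rightarrow> bool) \<Rightarrow> real \<Rightarrow> bool" where
  "rips_hyperbolic E \<delta> \<longleftrightarrow> \<delta> \<ge> 0 \<and>
     (\<forall>x y z gxy gyz gxz. geodesic E gxy x y \<and> geodesic E gyz y z \<and> geodesic E gxz x z \<longrightarrow>
        (\<forall>i \<le> gdist E x y. \<exists>j.
           (j \<le> gdist E y z \<and> real (gdist E (gxy i) (gyz j)) \<le> \<delta>) \<or>
           (j \<le> gdist E x z \<and> real (gdist E (gxy i) (gxz j)) \<le> \<delta>)))"

text \<open>The set F_{x,k,n}; the ball B(e;3 delta) is taken closed.\<close>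
definition Fset :: "('a \<Rightarrow> 'a \<Rightarrow> bool) \<Rightarrow> real \<Rightarrow> 'a \<Rightarrow> 'a \<Rightarrow> nat \<Rightarrow> nat \<Rightarrow> 'a set" where
  "Fset E \<delta> e x k n = {z. real (gdist E e z) > 3 * \<delta> \<and>
     (\<exists>y g t. gdist E x y \<le> k \<and> geodesic E g y e \<and>
        n \<le> t \<and> t \<le> 2 * n \<and> t \<le> gdist E y e \<and> z = g t)}"

definition Ffun :: "('a \<Rightarrow> 'a \<Rightarrow> bool) \<Rightarrow> real \<Rightarrow> 'a \<Rightarrow> 'a \<Rightarrow> nat \<Rightarrow> nat \<Rightarrow> 'a \<Rightarrow> real" where
  "Ffun E \<delta> e x k n = indicator (Fset E \<delta> e x k n)"

definition Hfun :: "('a \<Rightarrow> 'a \<Rightarrow> bool) \<Rightarrow> real \<Rightarrow> 'a \<Rightarrow> 'a \<Rightarrow> nat \<Rightarrow> 'a \<Rightarrow> real" where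
  "Hfun E \<delta> e x n = (\<lambda>z. (1 / real n) * (\<Sum>k\<in>{k::nat. real k \<le> real n / 4}. Ffun E \<delta> e x k n z))"

definition lp_norm_pow :: "real \<Rightarrow> ('a \<Rightarrow> real) \<Rightarrow> real" where
  "lp_norm_pow p f = (\<Sum>\<^sub>\<infinity>z. \<bar>f z\<bar> powr p)"

end

theory Submission
  imports Defs
begin

text \<open>Fix a geodesic \<open>h\<close> from \<open>x\<close> to \<open>e\<close>. By thinness of the triangles with vertices \<open>y\<close>, \<open>e\<close>, \<open>x\<close>,
  every \<open>F(x,k,n)\<close> with \<open>k \<le> n/4\<close> lies in the \<open>2\<delta>\<close>-ball about \<open>x\<close> together with the
  \<open>\<delta>\<close>-neighbourhood of \<open>h [0, 3n + \<delta>]\<close>; by bounded geometry this set has \<open>O(n)\<close> points, and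
  \<open>0 \<le> H(x,n) \<le> 2\<close>, which gives the upper bound. If \<open>d(x,e) \<ge> 2n\<close>, the points \<open>h t\<close> with
  \<open>n \<le> t < 2n - 3\<delta>\<close> lie in every \<open>F(x,k,n)\<close> (take \<open>y = x\<close>), so \<open>H(x,n) \<ge> 1/4\<close> at about \<open>n\<close>
  distinct points, which gives the lower bound.\<close>

abbreviation gball :: "('a \<Rightarrow> 'a \<Rightarrow> bool) \<Rightarrow> 'a \<Rightarrow> nat \<Rightarrow> 'a set" where
  "gball E x r \<equiv> {y. gdist E x y \<le> r}"

lemma walk_iff_successively: "walk E xs \<longleftrightarrow> xs \<noteq> [] \<and> successively E xs"
  by (simp add: walk_def successively_conv_nth)

lemma walk_append:
  assumes "walk E xs" "walk E ys" "last xs = hd ys"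
  shows "walk E (xs @ tl ys)"
proof -
  have "successively E (hd ys # tl ys)"
    using assms(2) by (simp add: walk_iff_successively)
  then show ?thesis
    using assms by (auto simp: walk_iff_successively successively_append_iff successively_Cons)
qed

lemma walk_rev:
  assumes "simplicial_graph E" "walk E xs"
  shows "walk E (rev xs)"
proof -
  have "successively (\<lambda>x y. E y x) xs"
    using assms by (auto simp: walk_iff_successively simplicial_graph_def elim: successively_mono)
  then show ?thesis using assms(2) by (simp add: walk_iff_successively)
qed

lemma walk_slice:
  assumes "walk E xs" "i \<le> j" "j < length xs"
  shows "walk E (drop i (take (Suc j) xs))"
proof -
  have "successively E xs"
    using assms(1) by (simp add: walk_iff_successively)
  then have "successively E (drop i (take (Suc j) xs))"
    by (metis append_take_drop_id successively_append_iff)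
  then show ?thesis
    using assms(2,3) by (simp add: walk_iff_successively successively_append_iff)
qed

lemma gdist_le_length: "walk E xs \<Longrightarrow> gdist E (hd xs) (last xs) \<le> length xs - 1"
  unfolding gdist_def by (rule Least_le) (auto simp: walk_def)

lemma gdist_refl [simp]: "gdist E x x = 0"
  using gdist_le_length[of E "[x]"] by (simp add: walk_def)

lemma gdist_nth_le:
  assumes "walk E xs" "i \<le> j" "j < length xs"
  shows "gdist E (xs ! i) (xs ! j) \<le> j - i"
proof -
  let ?ys = "drop i (take (Suc j) xs)"
  have "hd ?ys = xs ! i" "last ?ys = xs ! j" "length ?ys = Suc j - i"
    using assms(2,3) by (simp_all add: hd_drop_conv_nth last_conv_nth)
  then show ?thesis using gdist_le_length[OF walk_slice[OF assms]] by simp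
qed

lemma geodesic_gdist:
  assumes "geodesic E g x y" "i \<le> j" "j \<le> gdist E x y"
  shows "gdist E (g i) (g j) = j - i"
  using assms unfolding geodesic_def by auto

lemma geodesic_gdist_start: "geodesic E g x y \<Longrightarrow> s \<le> gdist E x y \<Longrightarrow> gdist E x (g s) = s"
  using geodesic_gdist[of E g x y 0 s] by (simp add: geodesic_def)

lemma rips_hyperbolic_nonneg: "rips_hyperbolic E \<delta> \<Longrightarrow> \<delta> \<ge> 0"
  by (simp add: rips_hyperbolic_def)

lemma quarter_indices_eq: "{k::nat. real k \<le> real n / 4} = {..n div 4}"
  by (auto simp: field_simps)

lemma Hfun_nonneg: "0 \<le> Hfun E \<delta> e x n z"
  by (simp add: Hfun_def Ffun_def sum_nonneg)

lemma Hfun_le_2: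
  assumes "n \<ge> 1"
  shows "Hfun E \<delta> e x n z \<le> 2"
proof -
  have "(\<Sum>k\<le>n div 4. Ffun E \<delta> e x k n z) \<le> (\<Sum>k\<le>n div 4. 1)"
    by (rule sum_mono) (simp add: Ffun_def indicator_def)
  also have "\<dots> \<le> 2 * real n"
    using assms by simp
  finally show ?thesis
    unfolding Hfun_def quarter_indices_eq using assms by (simp add: field_simps)
qed

lemma Hfun_nonzero_imp_Fset:
  "Hfun E \<delta> e x n z \<noteq> 0 \<Longrightarrow> \<exists>k. 4 * k \<le> n \<and> z \<in> Fset E \<delta> e x k n"
  by (auto simp: Hfun_def Ffun_def quarter_indices_eq intro: sum.neutral)

lemma Hfun_eq_if_in_every_Fset:
  "(\<And>k. z \<in> Fset E \<delta> e x k n) \<Longrightarrow> Hfun E \<delta> e x n z = real (n div 4 + 1) / real n"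
  unfolding Hfun_def Ffun_def quarter_indices_eq by simp

lemma lp_norm_pow_eq_sum:
  fixes f :: "'a \<Rightarrow> real"
  assumes "finite S" "\<And>z. z \<notin> S \<Longrightarrow> f z = 0"
  shows "lp_norm_pow p f = (\<Sum>z\<in>S. \<bar>f z\<bar> powr p)"
proof -
  have "lp_norm_pow p f = (\<Sum>\<^sub>\<infinity>z\<in>S. \<bar>f z\<bar> powr p)"
    unfolding lp_norm_pow_def by (rule infsum_cong_neutral) (use assms(2) in auto)
  then show ?thesis using assms(1) by simp
qed

lemma lp_norm_pow_nonneg: "0 \<le> lp_norm_pow p f"
  by (simp add: lp_norm_pow_def infsum_nonneg)

lemma lp_norm_pow_le_card:
  fixes f :: "'a \<Rightarrow> real"
  assumes "finite S" "\<And>z. z \<notin> S \<Longrightarrow> f z = 0" "p \<ge> 0" "\<And>z. z \<in> S \<Longrightarrow> \<bar>f z\<bar> \<le> M"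
  shows "lp_norm_pow p f \<le> real (card S) * M powr p"
proof -
  have "(\<Sum>z\<in>S. \<bar>f z\<bar> powr p) \<le> real (card S) * M powr p"
    using sum_bounded_above[of S "\<lambda>z. \<bar>f z\<bar> powr p" "M powr p"] assms(3,4) by (simp add: powr_mono2)
  then show ?thesis using lp_norm_pow_eq_sum[OF assms(1,2)] by simp
qed

lemma lp_norm_pow_ge_card:
  fixes f :: "'a \<Rightarrow> real"
  assumes "finite S" "\<And>z. z \<notin> S \<Longrightarrow> f z = 0" "A \<subseteq> S" "p \<ge> 0" "c \<ge> 0"
    and "\<And>z. z \<in> A \<Longrightarrow> c \<le> \<bar>f z\<bar>"
  shows "real (card A) * c powr p \<le> lp_norm_pow p f"
proof -
  have "real (card A) * c powr p \<le> (\<Sum>z\<in>A. \<bar>f z\<bar> powr p)"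
    using sum_bounded_below[of A "c powr p" "\<lambda>z. \<bar>f z\<bar> powr p"] assms(4-6) by (simp add: powr_mono2)
  also have "\<dots> \<le> (\<Sum>z\<in>S. \<bar>f z\<bar> powr p)"
    using assms(1,3) by (intro sum_mono2) auto
  finally show ?thesis using lp_norm_pow_eq_sum[OF assms(1,2)] by simp
qed

context
  fixes E :: "'a \<Rightarrow> 'a \<Rightarrow> bool"
  assumes connected: "connected_graph E"
begin

lemma shortest_walk_exists: "\<exists>xs. walk E xs \<and> hd xs = x \<and> last xs = y \<and> length xs = Suc (gdist E x y)"
proof -
  obtain xs where "walk E xs" "hd xs = x" "last xs = y"
    using connected unfolding connected_graph_def by blast
  then have "\<exists>n xs. walk E xs \<and> hd xs = x \<and> last xs = y \<and> length xs = Suc n"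
    by (metis Suc_pred length_greater_0_conv walk_def)
  then show ?thesis unfolding gdist_def by (rule LeastI_ex)
qed

lemma gdist_triangle: "gdist E x z \<le> gdist E x y + gdist E y z"
proof -
  obtain xs where xs: "walk E xs" "hd xs = x" "last xs = y" "length xs = Suc (gdist E x y)"
    using shortest_walk_exists by blast
  obtain ys where ys: "walk E ys" "hd ys = y" "last ys = z" "length ys = Suc (gdist E y z)"
    using shortest_walk_exists by blast
  have "hd (xs @ tl ys) = x" "last (xs @ tl ys) = z"
    using xs ys by (cases ys; auto simp: walk_def)+
  with gdist_le_length[OF walk_append[OF xs(1) ys(1)]] show ?thesis
    using xs ys by simp
qed

context
  assumes simplicial: "simplicial_graph E"
begin

lemma gdist_sym: "gdist E x y = gdist E y x"
proof -
  have "gdist E y x \<le> gdist E x y" for x y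
  proof -
    obtain xs where "walk E xs" "hd xs = x" "last xs = y" "length xs = Suc (gdist E x y)"
      using shortest_walk_exists by blast
    then show ?thesis
      using gdist_le_length[OF walk_rev[OF simplicial]] by (fastforce simp: hd_rev last_rev)
  qed
  then show ?thesis by (simp add: le_antisym)
qed

lemma geodesic_exists: "\<exists>g. geodesic E g x y"
proof -
  obtain xs where xs: "walk E xs" "hd xs = x" "last xs = y" "length xs = Suc (gdist E x y)"
    using shortest_walk_exists by blast
  define D where "D = gdist E x y"
  have x0: "xs ! 0 = x" and yD: "xs ! D = y"
    using xs unfolding D_def walk_def by (auto simp: hd_conv_nth last_conv_nth)
  have dist: "gdist E (xs ! i) (xs ! j) = j - i" if "i \<le> j" "j \<le> D" for i j
  proof -
    have "gdist E (xs ! i) (xs ! j) \<le> j - i" "gdist E x (xs ! i) \<le> i" "gdist E (xs ! j) y \<le> D - j"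
      using gdist_nth_le[OF xs(1), of i j] gdist_nth_le[OF xs(1), of 0 i] gdist_nth_le[OF xs(1), of j D]
        x0 yD that xs(4) unfolding D_def by simp_all
    moreover have "D \<le> gdist E x (xs ! i) + gdist E (xs ! i) (xs ! j) + gdist E (xs ! j) y"
      using gdist_triangle[of x "xs ! j" "xs ! i"] gdist_triangle[of x y "xs ! j"]
      unfolding D_def by linarith
    ultimately show ?thesis using that by linarith
  qed
  have "gdist E (xs ! i) (xs ! j) = nat \<bar>int i - int j\<bar>" if "i \<le> D" "j \<le> D" for i j
    using dist[of i j] dist[of j i] gdist_sym[of "xs ! i" "xs ! j"] that by (cases "i \<le> j") auto
  then have "geodesic E (\<lambda>i. xs ! i) x y"
    unfolding geodesic_def D_def[symmetric] using x0 yD by blast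
  then show ?thesis by blast
qed

lemma geodesic_reverse:
  assumes "geodesic E g x y"
  shows "geodesic E (\<lambda>i. g (gdist E x y - i)) y x"
  using assms gdist_sym[of y x]
  by (auto simp: geodesic_def of_nat_diff abs_minus_commute)

text \<open>Thinness of the triangle \<open>y\<close>, \<open>e\<close>, \<open>x\<close>: a point \<open>z = g t\<close> of the
  side from \<open>y\<close> to \<open>e\<close> that is \<open>\<delta>\<close>-close to the side from \<open>e\<close> to \<open>x\<close> is near \<open>h s\<close> with
  \<open>s \<le> k + t + \<delta> \<le> 3n + \<delta>\<close>. If it is \<open>\<delta>\<close>-close to the short side from \<open>y\<close> to \<open>x\<close> instead, then
  \<open>n \<le> t \<le> k + \<delta>\<close>, which together with \<open>4k \<le> n\<close> forces \<open>k \<le> \<delta>/3\<close> and \<open>d(x,z) \<le> 2\<delta>\<close>.\<close>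

lemma Fset_subset_tube:
  assumes hyp: "rips_hyperbolic E \<delta>" and h: "geodesic E h x e" and "4 * k \<le> n"
  shows "Fset E \<delta> e x k n \<subseteq>
    gball E x (nat \<lceil>2 * \<delta>\<rceil>) \<union> (\<Union>s\<le>3 * n + nat \<lceil>\<delta>\<rceil>. gball E (h s) (nat \<lceil>\<delta>\<rceil>))"
proof
  fix z assume "z \<in> Fset E \<delta> e x k n"
  then obtain y g t where yx: "gdist E x y \<le> k" and g: "geodesic E g y e"
    and t: "n \<le> t" "t \<le> 2 * n" "t \<le> gdist E y e" and z: "z = g t"
    unfolding Fset_def by blast
  obtain c where c: "geodesic E c y x" using geodesic_exists by blast
  define D where "D = gdist E x e"
  have h': "geodesic E (\<lambda>i. h (D - i)) e x" using geodesic_reverse[OF h] unfolding D_def .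
  have "\<delta> \<ge> 0" using hyp by (rule rips_hyperbolic_nonneg)
  then have ceil: "\<delta> \<le> real (nat \<lceil>\<delta>\<rceil>)" "2 * \<delta> \<le> real (nat \<lceil>2 * \<delta>\<rceil>)"
    by (simp_all add: of_nat_nat)
  have yz: "gdist E y z = t" using geodesic_gdist_start[OF g t(3)] z by simp
  have k: "4 * real k \<le> real n" using \<open>4 * k \<le> n\<close> by linarith
  obtain j where "(j \<le> gdist E e x \<and> real (gdist E z (h (D - j))) \<le> \<delta>) \<or>
      (j \<le> gdist E y x \<and> real (gdist E z (c j)) \<le> \<delta>)"
    using hyp g h' c t(3) z unfolding rips_hyperbolic_def by blast
  then consider "real (gdist E z (h (D - j))) \<le> \<delta>"
    | "j \<le> gdist E y x" "real (gdist E z (c j)) \<le> \<delta>" by blast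
  then show "z \<in> gball E x (nat \<lceil>2 * \<delta>\<rceil>) \<union> (\<Union>s\<le>3 * n + nat \<lceil>\<delta>\<rceil>. gball E (h s) (nat \<lceil>\<delta>\<rceil>))"
  proof cases
    case 1
    have "D - j = gdist E x (h (D - j))"
      using geodesic_gdist_start[OF h, of "D - j"] unfolding D_def by simp
    also have "\<dots> \<le> gdist E x y + gdist E y z + gdist E z (h (D - j))"
      using gdist_triangle[of x "h (D - j)" z] gdist_triangle[of x z y] by simp
    finally have "real (D - j) \<le> real (3 * n + nat \<lceil>\<delta>\<rceil>)"
      using 1 yx yz t k ceil by linarith
    moreover have "real (gdist E (h (D - j)) z) \<le> real (nat \<lceil>\<delta>\<rceil>)"
      using 1 ceil gdist_sym[of z "h (D - j)"] by linarith
    ultimately show ?thesis by (simp only: of_nat_le_iff) blast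
  next
    case 2
    have "gdist E y (c j) = j" "gdist E (c j) x = gdist E y x - j"
      using geodesic_gdist_start[OF c 2(1)] geodesic_gdist[OF c 2(1) order_refl] c
      by (simp_all add: geodesic_def)
    moreover have "gdist E y z \<le> gdist E y (c j) + gdist E (c j) z"
      and "gdist E x z \<le> gdist E x (c j) + gdist E (c j) z"
      by (rule gdist_triangle)+
    ultimately have "real (gdist E x z) \<le> real (nat \<lceil>2 * \<delta>\<rceil>)"
      using 2 yx yz t k ceil \<open>\<delta> \<ge> 0\<close> gdist_sym[of x y] gdist_sym[of x "c j"] gdist_sym[of z "c j"] by linarith
    then show ?thesis by (simp only: of_nat_le_iff) blast
  qed
qed

lemma Hfun_on_geodesic:
  assumes h: "geodesic E h x e" and t: "n \<le> t" "t \<le> 2 * n" "t \<le> gdist E x e"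
    and far: "3 * \<delta> < real (gdist E x e - t)"
  shows "Hfun E \<delta> e x n (h t) = real (n div 4 + 1) / real n"
proof (rule Hfun_eq_if_in_every_Fset)
  fix k
  have "h (gdist E x e) = e" using h by (simp add: geodesic_def)
  then have "gdist E e (h t) = gdist E x e - t"
    using geodesic_gdist[OF h t(3) order_refl] gdist_sym[of e] by simp
  then show "h t \<in> Fset E \<delta> e x k n"
    unfolding Fset_def using h t far by (auto intro!: exI[of _ x] exI[of _ h] exI[of _ t])
qed

lemma Hfun_finite_support:
  assumes "bounded_geometry E" and hyp: "rips_hyperbolic E \<delta>"
  shows "\<exists>A B. \<forall>x n. \<exists>S. finite S \<and> card S \<le> A + B * n \<and> (\<forall>z. z \<notin> S \<longrightarrow> Hfun E \<delta> e x n z = 0)"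
proof -
  define r0 where "r0 = nat \<lceil>2 * \<delta>\<rceil>"
  define r1 where "r1 = nat \<lceil>\<delta>\<rceil>"
  obtain N0 N1 where N0: "\<And>x. finite (gball E x r0) \<and> card (gball E x r0) \<le> N0"
    and N1: "\<And>x. finite (gball E x r1) \<and> card (gball E x r1) \<le> N1"
    using assms(1) unfolding bounded_geometry_def by metis
  have "\<exists>S. finite S \<and> card S \<le> (N0 + (r1 + 1) * N1) + 3 * N1 * n \<and>
      (\<forall>z. z \<notin> S \<longrightarrow> Hfun E \<delta> e x n z = 0)" for x n
  proof -
    obtain h where h: "geodesic E h x e" using geodesic_exists by blast
    define S where "S = gball E x r0 \<union> (\<Union>s\<le>3 * n + r1. gball E (h s) r1)"
    have "card (\<Union>s\<le>3 * n + r1. gball E (h s) r1) \<le> (\<Sum>s\<le>3 * n + r1. card (gball E (h s) r1))"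
      by (rule card_UN_le) simp
    also have "\<dots> \<le> (3 * n + r1 + 1) * N1"
      using sum_bounded_above[of "{..3 * n + r1}" "\<lambda>s. card (gball E (h s) r1)" N1] N1 by simp
    finally have "card S \<le> N0 + (3 * n + r1 + 1) * N1"
      using card_Un_le[of "gball E x r0" "\<Union>s\<le>3 * n + r1. gball E (h s) r1"] N0[of x]
      unfolding S_def by linarith
    moreover have "finite S" unfolding S_def using N0 N1 by simp
    moreover have "Hfun E \<delta> e x n z = 0" if "z \<notin> S" for z
    proof (rule ccontr)
      assume "Hfun E \<delta> e x n z \<noteq> 0"
      from Hfun_nonzero_imp_Fset[OF this]
      obtain k where "4 * k \<le> n" "z \<in> Fset E \<delta> e x k n" by blast
      then have "z \<in> S"
        using Fset_subset_tube[OF hyp h] unfolding S_def r0_def r1_def by blast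
      with that show False by contradiction
    qed
    ultimately show ?thesis by (auto simp: algebra_simps)
  qed
  then show ?thesis by blast
qed

lemma lp_norm_pow_Hfun_ge:
  assumes "finite S" "\<And>z. z \<notin> S \<Longrightarrow> Hfun E \<delta> e x n z = 0"
    and "\<delta> \<ge> 0" "p \<ge> 0" "n \<ge> 1" "2 * n \<le> gdist E x e"
  shows "real n \<le> 4 powr p * lp_norm_pow p (Hfun E \<delta> e x n) + 3 * \<delta> + 1"
proof -
  obtain h where h: "geodesic E h x e" using geodesic_exists by blast
  define I where "I = {n..<2 * n - nat \<lceil>3 * \<delta>\<rceil>}"
  have quarter: "1 / 4 \<le> \<bar>Hfun E \<delta> e x n (h t)\<bar>" if "t \<in> I" for t
  proof -
    have "3 * \<delta> < real (gdist E x e - t)"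
      using that assms(6) unfolding I_def by (simp add: of_nat_diff) linarith
    then have "Hfun E \<delta> e x n (h t) = real (n div 4 + 1) / real n"
      using that assms(6) unfolding I_def by (intro Hfun_on_geodesic[OF h]) auto
    moreover have "n \<le> 4 * (n div 4 + 1)" by presburger
    then have "1 / 4 \<le> real (n div 4 + 1) / real n"
      using assms(5) by (simp add: field_simps)
    ultimately show ?thesis by simp
  qed
  have "inj_on h I"
  proof (rule inj_onI)
    fix a b assume "a \<in> I" "b \<in> I" "h a = h b"
    moreover have "a \<le> gdist E x e" "b \<le> gdist E x e"
      using \<open>a \<in> I\<close> \<open>b \<in> I\<close> assms(6) unfolding I_def by auto
    ultimately have "nat \<bar>int a - int b\<bar> = 0"
      using h unfolding geodesic_def by (metis gdist_refl)
    then show "a = b" by simp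
  qed
  have "h ` I \<subseteq> S"
    using quarter assms(2) by fastforce
  have "real (card (h ` I)) * (1 / 4) powr p \<le> lp_norm_pow p (Hfun E \<delta> e x n)"
    using quarter by (intro lp_norm_pow_ge_card[OF assms(1,2) \<open>h ` I \<subseteq> S\<close> assms(4)]) auto
  moreover have "real n - 3 * \<delta> - 1 \<le> real (card (h ` I))"
  proof -
    have "real (nat \<lceil>3 * \<delta>\<rceil>) < 3 * \<delta> + 1"
      using assms(3) by (simp add: of_nat_nat) linarith
    then show ?thesis
      using card_image[OF \<open>inj_on h I\<close>] unfolding I_def
      by (cases "nat \<lceil>3 * \<delta>\<rceil> \<le> n") (auto simp: of_nat_diff)
  qed
  ultimately show ?thesis
    by (simp add: powr_divide field_simps)
qed

lemma lp_norm_pow_Hfun_upper: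
  assumes "bounded_geometry E" "rips_hyperbolic E \<delta>" "p \<ge> 0"
  shows "\<exists>C. \<forall>x n. n \<ge> 1 \<longrightarrow> lp_norm_pow p (Hfun E \<delta> e x n) \<le> C * real n + C"
proof -
  obtain A B where support: "\<And>x n. \<exists>S. finite S \<and> card S \<le> A + B * n \<and>
      (\<forall>z. z \<notin> S \<longrightarrow> Hfun E \<delta> e x n z = 0)"
    using Hfun_finite_support[OF assms(1,2)] by blast
  have "lp_norm_pow p (Hfun E \<delta> e x n) \<le> (2 powr p * (A + B)) * n + 2 powr p * (A + B)"
    if "n \<ge> 1" for x n
  proof -
    obtain S where S: "finite S" "card S \<le> A + B * n" "\<And>z. z \<notin> S \<Longrightarrow> Hfun E \<delta> e x n z = 0"
      using support by blast
    have "lp_norm_pow p (Hfun E \<delta> e x n) \<le> real (card S) * 2 powr p"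
      using Hfun_le_2[OF that] assms(3)
      by (intro lp_norm_pow_le_card[OF S(1,3)]) (auto simp: abs_of_nonneg[OF Hfun_nonneg])
    also have "\<dots> \<le> real ((A + B) * n + (A + B)) * 2 powr p"
    proof (intro mult_right_mono)
      show "real (card S) \<le> real ((A + B) * n + (A + B))"
        using S(2) unfolding of_nat_le_iff distrib_right by linarith
    qed simp
    finally show ?thesis by (simp add: algebra_simps)
  qed
  then show ?thesis by blast
qed

lemma lp_norm_pow_Hfun_lower:
  assumes "bounded_geometry E" "rips_hyperbolic E \<delta>" "p \<ge> 0"
  shows "\<exists>C. \<forall>x n. n \<ge> 1 \<longrightarrow> gdist E x e \<ge> 2 * n \<longrightarrow>
    real n \<le> C * lp_norm_pow p (Hfun E \<delta> e x n) + C"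
proof -
  have "\<delta> \<ge> 0" using assms(2) by (rule rips_hyperbolic_nonneg)
  define C where "C = 4 powr p + 3 * \<delta> + 1"
  have "real n \<le> C * lp_norm_pow p (Hfun E \<delta> e x n) + C"
    if "n \<ge> 1" "2 * n \<le> gdist E x e" for x n
  proof -
    obtain A B where "\<forall>x n. \<exists>S. finite S \<and> card S \<le> A + B * n \<and>
        (\<forall>z. z \<notin> S \<longrightarrow> Hfun E \<delta> e x n z = 0)"
      using Hfun_finite_support[OF assms(1,2)] by blast
    then obtain S where S: "finite S" "\<And>z. z \<notin> S \<Longrightarrow> Hfun E \<delta> e x n z = 0"
      by blast
    have "real n \<le> 4 powr p * lp_norm_pow p (Hfun E \<delta> e x n) + 3 * \<delta> + 1"
      using lp_norm_pow_Hfun_ge[OF S \<open>\<delta> \<ge> 0\<close> assms(3) that] .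
    moreover have "4 powr p * lp_norm_pow p (Hfun E \<delta> e x n) \<le> C * lp_norm_pow p (Hfun E \<delta> e x n)"
      unfolding C_def using \<open>\<delta> \<ge> 0\<close> by (intro mult_right_mono lp_norm_pow_nonneg) simp
    ultimately show ?thesis unfolding C_def using powr_ge_zero[of 4 p] by linarith
  qed
  then show ?thesis by blast
qed

end
end

theorem lemma3p5:
  fixes E :: "'a \<Rightarrow> 'a \<Rightarrow> bool" and \<delta> p :: real and e :: 'a
  assumes "simplicial_graph E" and "connected_graph E" and "bounded_geometry E"
    and "rips_hyperbolic E \<delta>" and "p \<ge> 1"
  shows "(\<exists>C. \<forall>x n. n \<ge> 1 \<longrightarrow> lp_norm_pow p (Hfun E \<delta> e x n) \<le> C * real n + C) \<and>
         (\<exists>C. \<forall>x n. n \<ge> 1 \<longrightarrow> gdist E x e \<ge> 2 * n \<longrightarrow>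
              real n \<le> C * lp_norm_pow p (Hfun E \<delta> e x n) + C)"
proof -
  have "p \<ge> 0" using assms(5) by simp
  then show ?thesis
    using lp_norm_pow_Hfun_upper[OF assms(2,1,3,4)] lp_norm_pow_Hfun_lower[OF assms(2,1,3,4)]
    by blast
qed

end
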